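(* Let $J\subset\mathbb{R}\setminus\{0\}$ be compact and $f\in C([0,1])$ (complex valued). Define $\psi:[0,1)\times J\to\mathbb{C}$ by \[ \psi(y,\alpha):=\frac{e^{i\varphi(y,\alpha)}}{1-y}\int_y^1e^{-i\varphi(x,\alpha)}f(x)dx. \] Then $\psi$ extends to a continuous function on $[0,1]\times J$.
   Context: For $\alpha\in\mathbb{R}\setminus\{0\}$ and $y\in(-1,1)$, $\varphi(y,\alpha):=-\frac{2\alpha}{(1-y)^2}+\frac{2\alpha}{1-y}-\frac{2}{\alpha}\log(1-y)$. *)

theory Defs
  imports "HOL-Analysis.Analysis"
begin

definition phi :: "real \<Rightarrow> real \<Rightarrow> real" where
  "phi y \<alpha> = - 2 * \<alpha> / (1 - y)^2 + 2 * \<alpha> / (1 - y) - (2 / \<alpha>) * ln (1 - y)"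

definition psi :: "(real \<Rightarrow> complex) \<Rightarrow> real \<Rightarrow> real \<Rightarrow> complex" where
  "psi f y \<alpha> = (exp (\<i> * complex_of_real (phi y \<alpha>)) / complex_of_real (1 - y)) *
      integral {y..1} (\<lambda>x. exp (- \<i> * complex_of_real (phi x \<alpha>)) * f x)"

end

(*
  Write E(x) = exp (- i phi(x, alpha)). Near x = 1 the derivative of phi is dominated by
  -4 alpha / (1 - x)^3, so w(x) = -i (1 - x)^3 / (4 alpha) E(x) satisfies w' = (1 + O(1 - x)) E
  and w(1) = 0. Integrating by parts gives |int_y^1 E| <= C (1 - y)^2, where C only depends on a
  lower bound for |alpha|. Splitting f = f(1) + (f - f(1)), the integral in psi is therefore
  O((1 - y)^2) + o(1 - y), so psi(y, alpha) tends to 0 as y -> 1, uniformly for alpha in J.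
  On [0,1) x J, psi is continuous because the tail integral int_y^1 of a bounded integrand that is
  continuous on [0,1) x J depends continuously on (y, alpha). Hence psi, extended by 0 on {1} x J,
  is continuous on [0,1] x J.
*)

theory Submission
  imports Defs
begin

section \<open>Integrals with a variable endpoint and a parameter\<close>

lemma integrable_on_bounded_continuous_real:
  fixes g :: "real \<Rightarrow> 'b::euclidean_space"
  assumes "continuous_on {a<..<b} g" "\<And>x. x \<in> {a<..<b} \<Longrightarrow> norm (g x) \<le> B"
  shows "g integrable_on {a..b}"
proof -
  have "g integrable_on {a<..<b}"
  proof (rule measurable_bounded_by_integrable_imp_integrable)
    show "g \<in> borel_measurable (lebesgue_on {a<..<b})"
      by (rule continuous_imp_measurable_on_sets_lebesgue[OF assms(1)]) auto
    show "(\<lambda>x. B) integrable_on {a<..<b}"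
      by (simp add: integrable_on_open_interval_real integrable_on_const)
  qed (use assms in auto)
  then show ?thesis
    by (simp add: integrable_on_open_interval_real)
qed

lemma norm_integral_Icc_le:
  fixes g :: "real \<Rightarrow> 'b::real_normed_vector"
  assumes "g integrable_on {a..b}" "a \<le> b" "\<And>x. x \<in> {a..b} \<Longrightarrow> norm (g x) \<le> B"
  shows "norm (integral {a..b} g) \<le> B * (b - a)"
proof -
  have "0 \<le> B"
    using assms(2) assms(3)[of a] norm_ge_zero[of "g a"] by (meson atLeastAtMost_iff order_refl order_trans)
  then show ?thesis
    using integrable_bound[where f = g and B = B and a = a and b = b] assms by simp
qed

lemma integral_Icc_rescale_unit:
  fixes g :: "real \<Rightarrow> 'b::real_normed_vector"
  assumes "m \<le> c" "g integrable_on {m..c}"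
  shows "integral {m..c} g = (c - m) *\<^sub>R integral {0..1} (\<lambda>t. g (m + t * (c - m)))"
proof (cases "m = c")
  case False
  with assms have "c - m > 0"
    by simp
  from has_integral_affinity'[OF integrable_integral[OF assms(2)[unfolded box_real(2)[symmetric]]] this, of m]
  have "((\<lambda>t. g (m + t * (c - m))) has_integral integral {m..c} g /\<^sub>R (c - m)) {0..1}"
    using \<open>c - m > 0\<close> by (simp add: mult.commute add.commute)
  then show ?thesis
    using \<open>c - m > 0\<close> by (simp add: integral_unique)
qed simp

lemma continuous_on_integral_lower_limit:
  fixes h :: "real \<Rightarrow> 'a::topological_space \<Rightarrow> 'b::euclidean_space"
  assumes cont: "continuous_on ({a..c} \<times> A) (\<lambda>(x, p). h x p)"
  shows "continuous_on ({a..c} \<times> A) (\<lambda>(y, p). integral {y..c} (\<lambda>x. h x p))"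
proof (rule continuous_on_eq)
  \<comment> \<open>substituting \<open>x = y + t (c - y)\<close> moves the dependence on \<open>y\<close> into an integrand on \<open>[0,1]\<close>\<close>
  define r where "r z = (fst (fst z) + snd z * (c - fst (fst z)), snd (fst z))"
    for z :: "(real \<times> 'a) \<times> real"
  have "r ((y, p), t) \<in> {a..c} \<times> A" if "y \<in> {a..c}" "p \<in> A" "t \<in> {0..1}" for y p t
  proof -
    have "0 \<le> t * (c - y)" "t * (c - y) \<le> c - y"
      using that by (auto intro: mult_left_le_one_le)
    then show ?thesis
      using that by (simp add: r_def)
  qed
  then have "r ` (({a..c} \<times> A) \<times> cbox 0 1) \<subseteq> {a..c} \<times> A"
    by force
  moreover have "continuous_on (({a..c} \<times> A) \<times> cbox 0 1) r"
    unfolding r_def by (intro continuous_intros)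
  ultimately have "continuous_on (({a..c} \<times> A) \<times> cbox 0 1) (\<lambda>z. h (fst (r z)) (snd (r z)))"
    using continuous_on_compose2[OF cont] by (auto simp: split_beta')
  then have "continuous_on ({a..c} \<times> A) (\<lambda>z. integral (cbox 0 1) (\<lambda>t. h (fst z + t * (c - fst z)) (snd z)))"
    by (intro integral_continuous_on_param) (simp add: r_def split_beta')
  then show "continuous_on ({a..c} \<times> A) (\<lambda>(y, p). (c - y) *\<^sub>R integral (cbox 0 1) (\<lambda>t. h (y + t * (c - y)) p))"
    unfolding split_beta' by (intro continuous_intros)
  fix z
  assume z: "z \<in> {a..c} \<times> A"
  then have "continuous_on {fst z..c} (\<lambda>x. h x (snd z))"
    by (intro continuous_on_compose2[OF cont, of _ "\<lambda>x. (x, snd z)", simplified]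
        continuous_on_Pair continuous_on_id continuous_on_const) auto
  then show "(\<lambda>(y, p). (c - y) *\<^sub>R integral (cbox 0 1) (\<lambda>t. h (y + t * (c - y)) p)) z
      = (\<lambda>(y, p). integral {y..c} (\<lambda>x. h x p)) z"
    using z by (auto simp: integral_Icc_rescale_unit integrable_continuous_real split: prod.splits)
qed

lemma uniform_limit_truncated_integral:
  fixes h :: "real \<Rightarrow> 'a \<Rightarrow> 'b::banach"
  assumes "a < b"
    and integrable: "\<And>y p. y \<in> {a..b} \<Longrightarrow> p \<in> A \<Longrightarrow> (\<lambda>x. h x p) integrable_on {y..b}"
    and bound: "\<And>x p. x \<in> {a..b} \<Longrightarrow> p \<in> A \<Longrightarrow> norm (h x p) \<le> B"
  shows "uniform_limit ({a..b} \<times> A) (\<lambda>c (y, p). integral {min y c..c} (\<lambda>x. h x p))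
           (\<lambda>(y, p). integral {y..b} (\<lambda>x. h x p)) (at_left b)"
proof (rule uniform_limitI)
  fix e :: real
  assume "0 < e"
  then have "\<forall>\<^sub>F c in at_left b. c \<in> {max a (b - e / (\<bar>B\<bar> + 1))<..<b}"
    using \<open>a < b\<close> by (intro eventually_at_left_real) auto
  then show "\<forall>\<^sub>F c in at_left b. \<forall>z\<in>{a..b} \<times> A. dist ((\<lambda>(y, p). integral {min y c..c} (\<lambda>x. h x p)) z)
      ((\<lambda>(y, p). integral {y..b} (\<lambda>x. h x p)) z) < e"
  proof eventually_elim
    case (elim c)
    then have c: "a < c" "c < b" "(\<bar>B\<bar> + 1) * (b - c) < e"
      by (auto simp: field_simps)
    have "dist (integral {min y c..c} (\<lambda>x. h x p)) (integral {y..b} (\<lambda>x. h x p)) < e"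
      if "y \<in> {a..b}" "p \<in> A" for y p
    proof -
      have "dist (integral {min y c..c} (\<lambda>x. h x p)) (integral {y..b} (\<lambda>x. h x p))
          = norm (integral {max y c..b} (\<lambda>x. h x p))"
      proof (cases "y \<le> c")
        case True
        then have "integral {y..b} (\<lambda>x. h x p) = integral {y..c} (\<lambda>x. h x p) + integral {c..b} (\<lambda>x. h x p)"
          using c integrable[OF that]
            Henstock_Kurzweil_Integration.integral_combine[of y c b "\<lambda>x. h x p"] by simp
        then show ?thesis
          using True by (simp add: dist_norm)
      next
        case False
        then show ?thesis
          by (simp add: dist_norm)
      qed
      also have "\<dots> \<le> \<bar>B\<bar> * (b - max y c)"
        using that c bound
        by (intro norm_integral_Icc_le integrable) (auto intro: order_trans[OF _ abs_ge_self])
      also have "\<dots> \<le> \<bar>B\<bar> * (b - c)"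
        by (intro mult_left_mono) auto
      also have "\<dots> < e"
        using c by (smt (verit) mult_right_mono)
      finally show ?thesis .
    qed
    then show ?case
      by auto
  qed
qed

lemma continuous_on_integral_tail:
  fixes h :: "real \<Rightarrow> 'a::metric_space \<Rightarrow> 'b::euclidean_space"
  assumes cont: "continuous_on ({a..<b} \<times> A) (\<lambda>(x, p). h x p)"
    and bound: "\<And>x p. x \<in> {a..b} \<Longrightarrow> p \<in> A \<Longrightarrow> norm (h x p) \<le> B"
  shows "continuous_on ({a..b} \<times> A) (\<lambda>(y, p). integral {y..b} (\<lambda>x. h x p))"
proof (cases "a < b")
  case False
  have "integral {y..b} (\<lambda>x. h x p) = 0" if "(y, p) \<in> {a..b} \<times> A" for y p
  proof -
    have "y = b"
      using that False by auto
    then show ?thesis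
      by simp
  qed
  then show ?thesis
    by (intro continuous_on_eq[OF continuous_on_const]) auto
next
  case True
  have "(\<lambda>x. h x p) integrable_on {y..b}" if "y \<in> {a..b}" "p \<in> A" for y p
  proof (rule integrable_on_bounded_continuous_real)
    show "continuous_on {y<..<b} (\<lambda>x. h x p)"
      using that by (intro continuous_on_compose2[OF cont, of _ "\<lambda>x. (x, p)", simplified]
          continuous_on_Pair continuous_on_id continuous_on_const) auto
    show "norm (h x p) \<le> B" if "x \<in> {y<..<b}" for x
      using bound that \<open>y \<in> {a..b}\<close> \<open>p \<in> A\<close> by auto
  qed
  note truncation = uniform_limit_truncated_integral[OF True this bound]
  have "continuous_on ({a..b} \<times> A) (\<lambda>(y, p). integral {min y c..c} (\<lambda>x. h x p))"
    if "c \<in> {a<..<b}" for c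
  proof -
    have "continuous_on ({a..c} \<times> A) (\<lambda>(y, p). integral {y..c} (\<lambda>x. h x p))"
      using that by (intro continuous_on_integral_lower_limit continuous_on_subset[OF cont]) auto
    moreover have "continuous_on ({a..b} \<times> A) (\<lambda>z. (min (fst z) c, snd z))"
      by (intro continuous_intros)
    moreover have "(\<lambda>z. (min (fst z) c, snd z)) ` ({a..b} \<times> A) \<subseteq> {a..c} \<times> A"
      using that by auto
    ultimately show ?thesis
      using continuous_on_compose2 by (fastforce simp: split_beta')
  qed
  then have "\<forall>\<^sub>F c in at_left b. continuous_on ({a..b} \<times> A) (\<lambda>(y, p). integral {min y c..c} (\<lambda>x. h x p))"
    using eventually_at_left_real[OF True] by (auto elim: eventually_mono)
  then show ?thesis
    using truncation trivial_limit_at_left_real by (rule uniform_limit_theorem)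
qed

lemma uniform_limit_at_left_imp_tendsto_within:
  fixes F :: "real \<Rightarrow> 'a::topological_space \<Rightarrow> 'b::metric_space"
  assumes "uniform_limit A F (\<lambda>_. L) (at_left c)" "S \<subseteq> {..<c} \<times> A"
  shows "((\<lambda>(y, q). F y q) \<longlongrightarrow> L) (at (c, p) within S)"
proof (rule tendstoI)
  fix e :: real
  assume "0 < e"
  have "filterlim fst (at_left c) (at (c, p) within S)"
  proof (rule tendsto_imp_filterlim_at_left)
    show "(fst \<longlongrightarrow> c) (at (c, p) within S)"
      using tendsto_fst[OF tendsto_ident_at] by fastforce
    show "\<forall>\<^sub>F z in at (c, p) within S. fst z < c"
      unfolding eventually_at_filter by (rule always_eventually) (use assms(2) in auto)
  qed
  with uniform_limitD[OF assms(1) \<open>0 < e\<close>]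
  have "\<forall>\<^sub>F z in at (c, p) within S. \<forall>q\<in>A. dist (F (fst z) q) L < e"
    by (rule eventually_compose_filterlim)
  moreover have "\<forall>\<^sub>F z in at (c, p) within S. snd z \<in> A"
    unfolding eventually_at_filter by (rule always_eventually) (use assms(2) in auto)
  ultimately show "\<forall>\<^sub>F z in at (c, p) within S. dist ((\<lambda>(y, q). F y q) z) L < e"
    by eventually_elim (auto simp: split_beta)
qed

lemma continuous_on_extension_by_zero:
  fixes g :: "'a::topological_space \<Rightarrow> 'b::real_normed_vector"
  assumes "closed Z" "continuous_on (S - Z) g"
    and "\<And>z. z \<in> S \<inter> Z \<Longrightarrow> (g \<longlongrightarrow> 0) (at z within S - Z)"
  shows "continuous_on S (\<lambda>x. if x \<in> Z then 0 else g x)"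
proof -
  define G where "G = (\<lambda>x. if x \<in> Z then 0 else g x)"
  have "(G \<longlongrightarrow> G x) (at x within S)" if "x \<in> S" for x
  proof -
    have "(g \<longlongrightarrow> G x) (at x within S - Z)"
      using assms(2,3) that by (cases "x \<in> Z") (simp_all add: G_def continuous_on_def)
    moreover have "\<forall>\<^sub>F y in at x within S - Z. G y = g y"
      by (auto simp: eventually_at_filter G_def)
    ultimately have "(G \<longlongrightarrow> G x) (at x within S - Z)"
      by (simp add: tendsto_cong)
    moreover have "(G \<longlongrightarrow> G x) (at x within S \<inter> Z)"
    proof (cases "x \<in> Z")
      case True
      have "\<forall>\<^sub>F y in at x within S \<inter> Z. G y = G x"
        using True by (auto simp: eventually_at_filter G_def)
      then show ?thesis
        by (rule tendsto_eventually)
    next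
      case False
      then have "\<not> x islimpt S \<inter> Z"
        using \<open>closed Z\<close> closed_limpt islimpt_subset by blast
      then have "at x within S \<inter> Z = bot"
        using trivial_limit_within by blast
      then show ?thesis
        by simp
    qed
    ultimately show ?thesis
      by (metis Lim_within_Un Un_Diff_Int)
  qed
  then have "continuous_on S G"
    by (simp add: continuous_on_def)
  then show ?thesis
    by (simp only: G_def)
qed

section \<open>The oscillatory factor\<close>

lemma phi_has_real_derivative:
  assumes "\<alpha> \<noteq> 0" "x < 1"
  shows "((\<lambda>x. phi x \<alpha>) has_real_derivative
           - 4 * \<alpha> / (1 - x)^3 + 2 * \<alpha> / (1 - x)^2 + 2 / (\<alpha> * (1 - x))) (at x within S)"
proof -
  have "((\<lambda>x. phi x \<alpha>) has_real_derivative
           - 4 * \<alpha> / s^3 + 2 * \<alpha> / s^2 + 2 / (\<alpha> * s)) (at (1 - s) within S)" if "s > 0" for s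
    unfolding phi_def using that assms
    by (auto intro!: derivative_eq_intros simp: field_simps eval_nat_numeral)
  from this[of "1 - x"] show ?thesis using assms by simp
qed

definition phase :: "real \<Rightarrow> real \<Rightarrow> complex" where
  "phase \<alpha> x = exp (- \<i> * complex_of_real (phi x \<alpha>))"

lemma norm_phase [simp]: "norm (phase \<alpha> x) = 1"
  by (simp add: phase_def)

lemma continuous_on_phase: "continuous_on ({..<1} \<times> - {0}) (\<lambda>(x, \<alpha>). phase \<alpha> x)"
  unfolding phase_def phi_def split_beta by (intro continuous_intros) auto

lemma continuous_on_phase_lessThan:
  assumes "\<alpha> \<noteq> 0"
  shows "continuous_on {..<1} (phase \<alpha>)"
  by (rule continuous_on_compose2[OF continuous_on_phase, of _ "\<lambda>x. (x, \<alpha>)", simplified])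
     (use assms in \<open>auto intro!: continuous_intros\<close>)

lemma phase_has_vector_derivative:
  assumes "\<alpha> \<noteq> 0" "x < 1"
  shows "(phase \<alpha> has_vector_derivative
           - \<i> * complex_of_real (- 4 * \<alpha> / (1 - x)^3 + 2 * \<alpha> / (1 - x)^2 + 2 / (\<alpha> * (1 - x)))
           * phase \<alpha> x) (at x within S)"
  unfolding phase_def
  by (rule field_vector_diff_chain_within[OF _ DERIV_exp[THEN has_field_derivative_at_within], unfolded o_def])
     (intro has_vector_derivative_mult_right has_vector_derivative_of_real phi_has_real_derivative assms)

lemma integrable_phase:
  assumes "\<alpha> \<noteq> 0"
  shows "phase \<alpha> integrable_on {y..1}"
proof (rule integrable_on_bounded_continuous_real[where B=1])
  show "continuous_on {y<..<1} (phase \<alpha>)"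
    by (rule continuous_on_subset[OF continuous_on_phase_lessThan[OF assms]]) auto
qed simp

definition phase_remainder :: "real \<Rightarrow> real \<Rightarrow> complex" where
  "phase_remainder \<alpha> x = complex_of_real (- (1 - x) / 2 - (1 - x)^2 / (2 * \<alpha>^2))
     + \<i> * complex_of_real (3 * (1 - x)^2 / (4 * \<alpha>))"

(* The amplitude (1 - x)^3 / (4 alpha) cancels the leading term -4 alpha / (1 - x)^3 of phi'. *)
lemma phase_antiderivative:
  assumes "\<alpha> \<noteq> 0" "x < 1"
  shows "((\<lambda>x. - \<i> * complex_of_real ((1 - x)^3 / (4 * \<alpha>)) * phase \<alpha> x) has_vector_derivative
           (1 + phase_remainder \<alpha> x) * phase \<alpha> x) (at x within S)"
proof -
  define v where "v = (1 - x)^3 / (4 * \<alpha>)"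
  define d where "d = - 4 * \<alpha> / (1 - x)^3 + 2 * \<alpha> / (1 - x)^2 + 2 / (\<alpha> * (1 - x))"
  have amplitude: "((\<lambda>x. complex_of_real ((1 - x)^3 / (4 * \<alpha>))) has_vector_derivative
      complex_of_real (- 3 * (1 - x)^2 / (4 * \<alpha>))) (at x within S)"
    using assms by (intro has_vector_derivative_of_real) (auto intro!: derivative_eq_intros simp: field_simps)
  have "s^3 / (4 * \<alpha>) * (- 4 * \<alpha> / s^3 + 2 * \<alpha> / s^2 + 2 / (\<alpha> * s))
      = s / 2 + s^2 / (2 * \<alpha>^2) - 1" if "s \<noteq> 0" for s
    using that assms by (simp add: field_simps eval_nat_numeral)
  from this[of "1 - x"] assms have vd: "v * d = (1 - x) / 2 + (1 - x)^2 / (2 * \<alpha>^2) - 1"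
    by (simp add: v_def d_def)
  have "- \<i> * complex_of_real v * (- \<i> * complex_of_real d * phase \<alpha> x)
      + - \<i> * complex_of_real (- 3 * (1 - x)^2 / (4 * \<alpha>)) * phase \<alpha> x
      = (\<i> * complex_of_real (3 * (1 - x)^2 / (4 * \<alpha>)) - complex_of_real (v * d)) * phase \<alpha> x"
    by (simp add: algebra_simps)
  also have "\<dots> = (1 + phase_remainder \<alpha> x) * phase \<alpha> x"
    unfolding vd phase_remainder_def by (simp add: field_simps)
  finally have derivative_eq: "- \<i> * complex_of_real v * (- \<i> * complex_of_real d * phase \<alpha> x)
      + - \<i> * complex_of_real (- 3 * (1 - x)^2 / (4 * \<alpha>)) * phase \<alpha> x
      = (1 + phase_remainder \<alpha> x) * phase \<alpha> x" .
  have "((\<lambda>x. - \<i> * complex_of_real ((1 - x)^3 / (4 * \<alpha>)) * phase \<alpha> x) has_vector_derivative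
      - \<i> * complex_of_real v * (- \<i> * complex_of_real d * phase \<alpha> x)
      + - \<i> * complex_of_real (- 3 * (1 - x)^2 / (4 * \<alpha>)) * phase \<alpha> x) (at x within S)"
    unfolding v_def d_def
    by (intro has_vector_derivative_mult has_vector_derivative_mult_right amplitude
        phase_has_vector_derivative assms)
  then show ?thesis
    unfolding derivative_eq .
qed

lemma norm_phase_remainder_le:
  assumes "0 \<le> x" "x \<le> 1"
  shows "norm (phase_remainder \<alpha> x) \<le> (1/2 + 1 / (2 * \<alpha>^2) + 3 / (4 * \<bar>\<alpha>\<bar>)) * (1 - x)"
proof -
  define s where "s = 1 - x"
  have s: "0 \<le> s" "s \<le> 1"
    using assms by (auto simp: s_def)
  then have s2: "s^2 \<le> s"
    by (simp add: power2_eq_square mult_left_le)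
  have "norm (phase_remainder \<alpha> x)
      \<le> \<bar>- s / 2 - s^2 / (2 * \<alpha>^2)\<bar> + \<bar>3 * s^2 / (4 * \<alpha>)\<bar>"
    unfolding phase_remainder_def s_def[symmetric]
    by (rule order_trans[OF norm_triangle_ineq]) (simp only: norm_mult norm_ii norm_of_real mult_1 order_refl)
  also have "\<dots> = s / 2 + s^2 / (2 * \<alpha>^2) + 3 * s^2 / (4 * \<bar>\<alpha>\<bar>)"
  proof -
    have "0 \<le> s^2 / (2 * \<alpha>^2)" by simp
    then have "\<bar>- s / 2 - s^2 / (2 * \<alpha>^2)\<bar> = s / 2 + s^2 / (2 * \<alpha>^2)"
      using s by linarith
    then show ?thesis by (simp add: abs_mult)
  qed
  also have "\<dots> \<le> s / 2 + s / (2 * \<alpha>^2) + 3 * s / (4 * \<bar>\<alpha>\<bar>)"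
    using s s2 by (intro add_mono order_refl divide_right_mono) auto
  also have "\<dots> = (1/2 + 1 / (2 * \<alpha>^2) + 3 / (4 * \<bar>\<alpha>\<bar>)) * s"
    by (simp add: field_simps)
  finally show ?thesis
    by (simp add: s_def)
qed

lemma phase_integration_by_parts:
  assumes "\<alpha> \<noteq> 0" "y \<le> 1"
  shows "((\<lambda>x. (1 + phase_remainder \<alpha> x) * phase \<alpha> x) has_integral
           \<i> * complex_of_real ((1 - y)^3 / (4 * \<alpha>)) * phase \<alpha> y) {y..1}"
proof -
  define w where "w x = - \<i> * complex_of_real ((1 - x)^3 / (4 * \<alpha>)) * phase \<alpha> x" for x
  have norm_w: "norm (w x) = \<bar>1 - x\<bar>^3 / (4 * \<bar>\<alpha>\<bar>)" for x
    unfolding w_def norm_mult norm_minus_cancel norm_ii norm_of_real norm_phase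
    by (simp add: abs_mult power_abs)
  have "isCont w x" if "x \<in> {y..1}" for x
  proof (cases "x < 1")
    case True
    then show ?thesis
      using phase_antiderivative[OF assms(1) True] has_vector_derivative_continuous
      unfolding w_def by blast
  next
    case False
    \<comment> \<open>\<open>phase \<alpha> 1\<close> is a junk value, but the amplitude vanishes at 1\<close>
    have "isCont (\<lambda>x. \<bar>1 - x\<bar>^3 / (4 * \<bar>\<alpha>\<bar>)) 1"
      using assms by (intro continuous_intros) auto
    then have "(w \<longlongrightarrow> 0) (at 1)"
      by (intro Lim_null_comparison[of w]) (simp_all add: norm_w isCont_def)
    then show ?thesis
      using False that by (simp add: isCont_def w_def)
  qed
  then have "((\<lambda>x. (1 + phase_remainder \<alpha> x) * phase \<alpha> x) has_integral w 1 - w y) {y..1}"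
    using assms unfolding w_def
    by (intro fundamental_theorem_of_calculus_interior continuous_at_imp_continuous_on phase_antiderivative) auto
  then show ?thesis
    by (simp add: w_def)
qed

lemma norm_integral_phase_le:
  assumes "\<alpha> \<noteq> 0" "0 \<le> y" "y \<le> 1"
  shows "norm (integral {y..1} (phase \<alpha>)) \<le> (1 + 1 / \<bar>\<alpha>\<bar>)^2 / 2 * (1 - y)^2"
proof -
  define K where "K = 1/2 + 1 / (2 * \<alpha>^2) + 3 / (4 * \<bar>\<alpha>\<bar>)"
  define boundary where "boundary = \<i> * complex_of_real ((1 - y)^3 / (4 * \<alpha>)) * phase \<alpha> y"
  have "(\<lambda>x. phase \<alpha> x + phase_remainder \<alpha> x * phase \<alpha> x) integrable_on {y..1}"
    and integral_sum: "integral {y..1} (\<lambda>x. phase \<alpha> x + phase_remainder \<alpha> x * phase \<alpha> x) = boundary"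
    using phase_integration_by_parts[OF assms(1,3)] by (auto simp: has_integral_iff algebra_simps boundary_def)
  then have integrable_remainder: "(\<lambda>x. phase_remainder \<alpha> x * phase \<alpha> x) integrable_on {y..1}"
    using integrable_diff[OF _ integrable_phase[OF assms(1)]] by fastforce
  have integral_eq: "integral {y..1} (phase \<alpha>)
      = boundary - integral {y..1} (\<lambda>x. phase_remainder \<alpha> x * phase \<alpha> x)"
    using integral_sum integral_add[OF integrable_phase[OF assms(1)] integrable_remainder]
    by (simp add: algebra_simps)
  have norm_boundary: "norm boundary \<le> (1 - y)^2 / (4 * \<bar>\<alpha>\<bar>)"
  proof -
    have "norm boundary = (1 - y)^3 / (4 * \<bar>\<alpha>\<bar>)"
      unfolding boundary_def norm_mult norm_ii norm_of_real norm_phase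
      using assms by (simp add: abs_mult)
    also have "\<dots> \<le> (1 - y)^2 / (4 * \<bar>\<alpha>\<bar>)"
      using assms by (intro divide_right_mono power_decreasing) auto
    finally show ?thesis .
  qed
  have norm_remainder: "norm (integral {y..1} (\<lambda>x. phase_remainder \<alpha> x * phase \<alpha> x)) \<le> K * (1 - y)^2"
  proof -
    have "norm (phase_remainder \<alpha> x * phase \<alpha> x) \<le> K * (1 - y)" if "x \<in> {y..1}" for x
    proof -
      have "norm (phase_remainder \<alpha> x) \<le> K * (1 - x)"
        using assms that norm_phase_remainder_le[of x \<alpha>] by (simp add: K_def)
      also have "\<dots> \<le> K * (1 - y)"
        using that by (intro mult_left_mono) (auto simp: K_def)
      finally show ?thesis
        by (simp add: norm_mult)
    qed
    then show ?thesis
      using norm_integral_Icc_le[OF integrable_remainder \<open>y \<le> 1\<close>, of "K * (1 - y)"]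
      by (simp add: power2_eq_square)
  qed
  have "norm (integral {y..1} (phase \<alpha>))
      \<le> norm boundary + norm (integral {y..1} (\<lambda>x. phase_remainder \<alpha> x * phase \<alpha> x))"
    unfolding integral_eq by (rule norm_triangle_ineq4)
  also have "\<dots> \<le> (1 - y)^2 / (4 * \<bar>\<alpha>\<bar>) + K * (1 - y)^2"
    using norm_boundary norm_remainder by (rule add_mono)
  also have "\<dots> = (1 + 1 / \<bar>\<alpha>\<bar>)^2 / 2 * (1 - y)^2"
  proof -
    have "s^2 / (4 * t) + (1/2 + 1 / (2 * t^2) + 3 / (4 * t)) * s^2 = (1 + 1 / t)^2 / 2 * s^2"
      if "t > 0" for s t :: real
      using that by (simp add: field_simps power2_eq_square)
    from this[of "\<bar>\<alpha>\<bar>" "1 - y"] show ?thesis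
      using assms by (simp add: K_def)
  qed
  finally show ?thesis .
qed

lemma norm_integral_phase_mult_le:
  assumes "\<alpha> \<noteq> 0" "0 \<le> y" "y \<le> 1" "continuous_on {y..1} f"
    and "\<And>x. x \<in> {y..1} \<Longrightarrow> norm (f x - f 1) \<le> \<eta>"
  shows "norm (integral {y..1} (\<lambda>x. phase \<alpha> x * f x))
           \<le> norm (f 1) * ((1 + 1 / \<bar>\<alpha>\<bar>)^2 / 2 * (1 - y)^2) + \<eta> * (1 - y)"
proof -
  have integrable_deviation: "(\<lambda>x. phase \<alpha> x * (f x - f 1)) integrable_on {y..1}"
  proof (rule integrable_on_bounded_continuous_real)
    have "continuous_on {y<..<1} (phase \<alpha>)"
      by (rule continuous_on_subset[OF continuous_on_phase_lessThan[OF assms(1)]]) auto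
    moreover have "continuous_on {y<..<1} f"
      by (rule continuous_on_subset[OF assms(4)]) auto
    ultimately show "continuous_on {y<..<1} (\<lambda>x. phase \<alpha> x * (f x - f 1))"
      by (intro continuous_on_mult continuous_on_diff continuous_on_const)
    show "norm (phase \<alpha> x * (f x - f 1)) \<le> \<eta>" if "x \<in> {y<..<1}" for x
      using assms(5)[of x] that by (simp add: norm_mult)
  qed
  have "(\<lambda>x. phase \<alpha> x * f x) = (\<lambda>x. f 1 * phase \<alpha> x + phase \<alpha> x * (f x - f 1))"
    by (simp add: algebra_simps)
  then have "norm (integral {y..1} (\<lambda>x. phase \<alpha> x * f x))
      = norm (f 1 * integral {y..1} (phase \<alpha>) + integral {y..1} (\<lambda>x. phase \<alpha> x * (f x - f 1)))"
    using integral_add[OF integrable_on_mult_right[OF integrable_phase[OF assms(1)]] integrable_deviation]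
    by simp
  also have "\<dots> \<le> norm (f 1) * norm (integral {y..1} (phase \<alpha>))
      + norm (integral {y..1} (\<lambda>x. phase \<alpha> x * (f x - f 1)))"
    by (rule order_trans[OF norm_triangle_ineq]) (simp add: norm_mult)
  also have "\<dots> \<le> norm (f 1) * ((1 + 1 / \<bar>\<alpha>\<bar>)^2 / 2 * (1 - y)^2) + \<eta> * (1 - y)"
  proof (rule add_mono[OF mult_left_mono[OF norm_integral_phase_le[OF assms(1-3)] norm_ge_zero]])
    show "norm (integral {y..1} (\<lambda>x. phase \<alpha> x * (f x - f 1))) \<le> \<eta> * (1 - y)"
      using assms(5) by (intro norm_integral_Icc_le[OF integrable_deviation \<open>y \<le> 1\<close>]) (simp add: norm_mult)
  qed
  finally show ?thesis .
qed

section \<open>Decay and continuity of psi\<close>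

lemma psi_eq:
  "psi f y \<alpha> = exp (\<i> * complex_of_real (phi y \<alpha>)) / complex_of_real (1 - y) *
     integral {y..1} (\<lambda>x. phase \<alpha> x * f x)"
  by (simp add: psi_def phase_def)

lemma norm_psi_le:
  assumes "0 < a" "a \<le> \<bar>\<alpha>\<bar>" "0 \<le> y" "y < 1" "continuous_on {y..1} f"
    and "\<And>x. x \<in> {y..1} \<Longrightarrow> norm (f x - f 1) \<le> \<eta>"
  shows "norm (psi f y \<alpha>) \<le> norm (f 1) * ((1 + 1 / a)^2 / 2) * (1 - y) + \<eta>"
proof -
  have "(1 + 1 / \<bar>\<alpha>\<bar>)^2 \<le> (1 + 1 / a)^2"
    using assms(1,2) by (intro power_mono add_left_mono divide_left_mono) auto
  have "norm (integral {y..1} (\<lambda>x. phase \<alpha> x * f x))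
      \<le> norm (f 1) * ((1 + 1 / \<bar>\<alpha>\<bar>)^2 / 2 * (1 - y)^2) + \<eta> * (1 - y)"
    using assms by (intro norm_integral_phase_mult_le) auto
  also have "\<dots> \<le> norm (f 1) * ((1 + 1 / a)^2 / 2 * (1 - y)^2) + \<eta> * (1 - y)"
    using \<open>(1 + 1 / \<bar>\<alpha>\<bar>)^2 \<le> (1 + 1 / a)^2\<close>
    by (intro add_right_mono mult_left_mono divide_right_mono mult_right_mono) auto
  also have "\<dots> = (norm (f 1) * ((1 + 1 / a)^2 / 2) * (1 - y) + \<eta>) * (1 - y)"
    by (simp add: power2_eq_square[of "1 - y"] algebra_simps)
  moreover have "norm (psi f y \<alpha>) = norm (integral {y..1} (\<lambda>x. phase \<alpha> x * f x)) / (1 - y)"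
    unfolding psi_eq norm_mult norm_divide norm_of_real using assms by (simp add: norm_exp_eq_Re)
  ultimately show ?thesis
    using assms by (simp add: pos_divide_le_eq)
qed

lemma psi_uniform_limit_zero:
  assumes "continuous_on {0..1} f" "0 < a" "\<And>\<alpha>. \<alpha> \<in> J \<Longrightarrow> a \<le> \<bar>\<alpha>\<bar>"
  shows "uniform_limit J (\<lambda>y \<alpha>. psi f y \<alpha>) (\<lambda>_. 0) (at_left 1)"
proof (rule uniform_limitI)
  fix e :: real
  assume "0 < e"
  then obtain d where "d > 0" and d: "\<And>x. x \<in> {0..1} \<Longrightarrow> dist x 1 < d \<Longrightarrow> dist (f x) (f 1) < e / 2"
    using assms(1) unfolding continuous_on_iff by (metis atLeastAtMost_iff half_gt_zero order_refl zero_le_one)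
  define C where "C = norm (f 1) * ((1 + 1 / a)^2 / 2)"
  have "C \<ge> 0"
    by (simp add: C_def)
  have "\<forall>\<^sub>F y in at_left 1. y \<in> {max 0 (1 - min d (e / (2 * (C + 1))))<..<1}"
    using \<open>d > 0\<close> \<open>0 < e\<close> \<open>C \<ge> 0\<close> by (intro eventually_at_left_real) auto
  then show "\<forall>\<^sub>F y in at_left 1. \<forall>\<alpha>\<in>J. dist (psi f y \<alpha>) 0 < e"
  proof eventually_elim
    case (elim y)
    then have y: "0 \<le> y" "y < 1" "1 - y < d" "1 - y < e / (2 * (C + 1))"
      by auto
    then have "(C + 1) * (1 - y) < e / 2"
      using \<open>C \<ge> 0\<close> by (simp add: less_divide_eq mult.commute mult.left_commute)
    moreover have "C * (1 - y) \<le> (C + 1) * (1 - y)"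
      using y by (intro mult_right_mono) auto
    ultimately have "C * (1 - y) < e / 2"
      by linarith
    have "norm (psi f y \<alpha>) \<le> C * (1 - y) + e / 2" if "\<alpha> \<in> J" for \<alpha>
      unfolding C_def
    proof (rule norm_psi_le)
      show "continuous_on {y..1} f"
        using y by (intro continuous_on_subset[OF assms(1)]) auto
      show "norm (f x - f 1) \<le> e / 2" if "x \<in> {y..1}" for x
        using d[of x] that y by (auto simp: dist_norm)
    qed (use assms that y in auto)
    then show ?case
      using \<open>C * (1 - y) < e / 2\<close> by fastforce
  qed
qed

lemma continuous_on_psi:
  assumes "0 \<notin> J" "continuous_on {0..1} f"
  shows "continuous_on ({0..<1} \<times> J) (\<lambda>(y, \<alpha>). psi f y \<alpha>)"
proof -
  have "bounded (f ` {0..1})"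
    by (intro compact_imp_bounded compact_continuous_image assms(2) compact_Icc)
  then obtain M where M: "\<forall>x \<in> {0..1}. norm (f x) \<le> M"
    by (auto simp: bounded_iff)
  have "continuous_on ({0..1} \<times> J) (\<lambda>(y, \<alpha>). integral {y..1} (\<lambda>x. phase \<alpha> x * f x))"
  proof (rule continuous_on_integral_tail)
    have "continuous_on ({0..<1} \<times> J) (\<lambda>(x, \<alpha>). phase \<alpha> x)"
      by (rule continuous_on_subset[OF continuous_on_phase]) (use assms(1) in auto)
    moreover have "continuous_on ({0..<1} \<times> J) (\<lambda>(x, \<alpha>). f x)"
      unfolding split_beta by (rule continuous_on_compose2[OF assms(2) continuous_on_fst]) auto
    ultimately show "continuous_on ({0..<1} \<times> J) (\<lambda>(x, \<alpha>). phase \<alpha> x * f x)"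
      unfolding split_beta' by (rule continuous_on_mult)
    show "norm (phase \<alpha> x * f x) \<le> M" if "x \<in> {0..1}" for x \<alpha>
      using M that by (simp add: norm_mult)
  qed
  then have "continuous_on ({0..<1} \<times> J) (\<lambda>z. integral {fst z..1} (\<lambda>x. phase (snd z) x * f x))"
    unfolding split_beta' by (rule continuous_on_subset) auto
  moreover have "continuous_on ({0..<1} \<times> J) (\<lambda>z. phi (fst z) (snd z))"
    unfolding phi_def using assms(1) by (intro continuous_intros) auto
  ultimately show ?thesis
    unfolding psi_eq split_beta' by (intro continuous_intros) auto
qed

theorem lemma3p34:
  fixes J :: "real set" and f :: "real \<Rightarrow> complex"
  assumes "compact J" and "0 \<notin> J"
    and "continuous_on {0..1} f"
  shows "\<exists>g :: real \<times> real \<Rightarrow> complex.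
           continuous_on ({0..1} \<times> J) g \<and>
           (\<forall>y \<in> {0..<1}. \<forall>\<alpha> \<in> J. g (y, \<alpha>) = psi f y \<alpha>)"
proof -
  obtain a where "0 < a" and a: "\<And>\<alpha>. \<alpha> \<in> J \<Longrightarrow> a \<le> \<bar>\<alpha>\<bar>"
    using separate_point_closed[OF compact_imp_closed[OF assms(1)] assms(2)] by (auto simp: dist_real_def)
  have "uniform_limit J (\<lambda>y \<alpha>. psi f y \<alpha>) (\<lambda>_. 0) (at_left 1)"
    using assms(3) \<open>0 < a\<close> a by (rule psi_uniform_limit_zero)
  then have "((\<lambda>(y, \<alpha>). psi f y \<alpha>) \<longlongrightarrow> 0) (at (1, \<alpha>) within {0..<1} \<times> J)" for \<alpha>
    by (rule uniform_limit_at_left_imp_tendsto_within) auto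
  then have "((\<lambda>(y, \<alpha>). psi f y \<alpha>) \<longlongrightarrow> 0) (at z within {0..<1} \<times> J)" if "z \<in> {1} \<times> J" for z
    using that by auto
  moreover have "{0..1} \<times> J - {1} \<times> UNIV = {0..<1::real} \<times> J"
    by auto
  ultimately have "continuous_on ({0..1} \<times> J) (\<lambda>z. if z \<in> {1} \<times> UNIV then 0 else psi f (fst z) (snd z))"
    using continuous_on_psi[OF assms(2,3)]
    by (intro continuous_on_extension_by_zero) (auto simp: closed_Times split_beta')
  then show ?thesis
    by force
qed

end
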